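(* Let $G$ be a countable self-similar group over $X$ with $\mu((X^\omega)_{G\text{-reg}})=1$, and fix a strictly $G$-regular point $w_0\in X^\omega$. If $\eta\in\mathbb{C}\langle G,X\rangle$ satisfies $\pi_{w_0}(\eta)=0$, then $\psi(\eta)=0$. Consequently the assignment $\psi'(\pi_{w_0}(f)):=\psi(f)$ for $f\in\langle G,X\rangle$ extends to a well-defined linear functional $\psi'$ on $\pi_{w_0}(\mathbb{C}\langle G,X\rangle)$.
   Context: $X$ is a finite set with $|X|\ge2$, $X^*$ the finite words, $X^\omega$ the right-infinite words with the product topology, $\mu$ the uniform Bernoulli measure on $X^\omega$. A self-similar group over $X$ is a subgroup $G\subset\mathrm{Homeo}(X^\omega)$ such that for all $g\in G$, $x\in X$ there are $g(x)\in X$, $g|_x\in G$ with $g(xw)=g(x)g|_x(w)$ for all $w$. $\mathcal{O}_{G_{\max}}$ is the universal unital C$^*$-algebra generated by unitaries $g\in G$ (respecting relations of $G$) and $S_x$ ($x\in X$) with $S_x^*S_x=1$, $\sum_yS_yS_y^*=1$, $gS_x=S_{g(x)}g|_x$; $S_u=S_{x_1}\cdots S_{x_n}$ for $u=x_1\cdots x_n$. $\langle G,X\rangle=\{S_ugS_v^*:u,v\in X^*,g\in G\}$, whose elements are also regarded as partial homeomorphisms of $X^\omega$ ($S_u:w\mapsto uw$, $S_v^*$ its partial inverse on $vX^\omega$). $\mathbb{C}\langle G,X\rangle=\mathrm{span}\,\langle G,X\rangle\subset\mathcal{O}_{G_{\max}}$. The linear functional $\psi$ on $\mathbb{C}\langle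 G,X\rangle$ is $\psi(S_ugS_v^* )=\delta_{u,v}|X|^{-|u|}\mu(\{w:g(w)=w\})$ (equivalently $\psi(f)=\mu(\mathrm{Fix}(f))$ for $f\in\langle G,X\rangle$). For $w\in X^\omega$, $\pi_w$ is the representation of $\mathcal{O}_{G_{\max}}$ on $\ell^2$ of the orbit $\{f(w):f\in\langle G,X\rangle,w\in\mathrm{Dom} f\}$ given by $\pi_w(S_x)\delta_{w_1}=\delta_{xw_1}$, $\pi_w(g)\delta_{w_1}=\delta_{g(w_1)}$. For $f\in\langle G,X\rangle$, $w$ is $f$-regular if $f$ is undefined at $w$, or $f(w)\ne w$, or $w$ has an open neighborhood of fixed points of $f$; $w$ is strictly $G$-regular if it is $f$-regular for all $f\in\langle G,X\rangle$; $w$ is $G$-regular if it is $g$-regular for all $g\in G$, and $(X^\omega)_{G\text{-reg}}$ is the set of $G$-regular points. *)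

theory Defs
  imports "HOL-Analysis.Analysis" "HOL-Probability.Probability"
begin

text \<open>The alphabet X is the finite type 'x (X = UNIV); X^* = 'x list;
  X^omega = nat => 'x (right-infinite words).\<close>

type_synonym 'x infword = "nat \<Rightarrow> 'x"

definition Xomega_top :: "'x infword topology" where
  "Xomega_top = product_topology (\<lambda>_::nat. discrete_topology (UNIV::'x set)) UNIV"

definition bernoulli_mu :: "'x::finite infword measure" where
  "bernoulli_mu = (\<Pi>\<^sub>M i\<in>(UNIV::nat set). measure_pmf (pmf_of_set (UNIV::'x set)))"

definition prep :: "'x list \<Rightarrow> 'x infword \<Rightarrow> 'x infword" where
  "prep u w = (\<lambda>i. if i < length u then u ! i else w (i - length u))"

definition dropw :: "nat \<Rightarrow> 'x infword \<Rightarrow> 'x infword" where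
  "dropw n w = (\<lambda>i. w (i + n))"

definition has_prefix :: "'x list \<Rightarrow> 'x infword \<Rightarrow> bool" where
  "has_prefix v w \<longleftrightarrow> (\<forall>i<length v. w i = v ! i)"

definition self_similar_group :: "('x infword \<Rightarrow> 'x infword) set \<Rightarrow> bool" where
  "self_similar_group G \<longleftrightarrow>
     (\<forall>g\<in>G. homeomorphic_map Xomega_top Xomega_top g) \<and>
     id \<in> G \<and> (\<forall>g\<in>G. \<forall>h\<in>G. g \<circ> h \<in> G) \<and> (\<forall>g\<in>G. inv g \<in> G) \<and>
     (\<forall>g\<in>G. \<forall>x. \<exists>y. \<exists>h\<in>G. \<forall>w. g (prep [x] w) = prep [y] (h w))"

text \<open>Elements S_u g S_v^* of <G,X>, encoded as triples (u,g,v), acting as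
  partial homeomorphisms: defined on vX^omega, v w' \<mapsto> u g(w').\<close>
type_synonym 'x gen = "'x list \<times> ('x infword \<Rightarrow> 'x infword) \<times> 'x list"

definition GX :: "('x infword \<Rightarrow> 'x infword) set \<Rightarrow> 'x gen set" where
  "GX G = {(u, g, v). g \<in> G}"

definition pact :: "'x gen \<Rightarrow> 'x infword \<Rightarrow> 'x infword option" where
  "pact f w = (case f of (u, g, v) \<Rightarrow>
     if has_prefix v w then Some (prep u (g (dropw (length v) w))) else None)"

definition f_regular :: "'x gen \<Rightarrow> 'x infword \<Rightarrow> bool" where
  "f_regular f w \<longleftrightarrow> pact f w = None \<or> pact f w \<noteq> Some w \<or>
     (\<exists>U. openin Xomega_top U \<and> w \<in> U \<and> (\<forall>v\<in>U. pact f v = Some v))"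

definition strictly_G_regular :: "('x infword \<Rightarrow> 'x infword) set \<Rightarrow> 'x infword \<Rightarrow> bool" where
  "strictly_G_regular G w \<longleftrightarrow> (\<forall>f\<in>GX G. f_regular f w)"

definition G_regular :: "('x infword \<Rightarrow> 'x infword) set \<Rightarrow> 'x infword \<Rightarrow> bool" where
  "G_regular G w \<longleftrightarrow> (\<forall>g\<in>G. f_regular ([], g, []) w)"

definition orbit :: "('x infword \<Rightarrow> 'x infword) set \<Rightarrow> 'x infword \<Rightarrow> 'x infword set" where
  "orbit G w = {w1. \<exists>f\<in>GX G. pact f w = Some w1}"

text \<open>Elements of C<G,X> are given as finite linear combinations sum c_i f_i,
  represented by lists of (coefficient, generator) pairs with generators in <G,X>.\<close>
definition CGX :: "('x infword \<Rightarrow> 'x infword) set \<Rightarrow> (complex \<times> 'x gen) list set" where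
  "CGX G = {eta. \<forall>(c, f)\<in>set eta. f \<in> GX G}"

text \<open>The operator pi_w(eta) on l^2(orbit of w), given by its values on the
  standard basis: pi_rep G w eta w1 is the vector pi_w(eta) delta_{w1}
  (for w1 in the orbit), as a function of the orbit point w2.
  pi_w(S_u g S_v^*) delta_{w1} = delta_{f(w1)} if w1 in vX^omega, else 0.\<close>
definition pi_rep :: "('x infword \<Rightarrow> 'x infword) set \<Rightarrow> 'x infword \<Rightarrow> (complex \<times> 'x gen) list
    \<Rightarrow> 'x infword \<Rightarrow> 'x infword \<Rightarrow> complex" where
  "pi_rep G w eta w1 w2 =
     (if w1 \<in> orbit G w \<and> w2 \<in> orbit G w
      then (\<Sum>(c, f)\<leftarrow>eta. if pact f w1 = Some w2 then c else 0) else 0)"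

definition psi_gen :: "'x::finite gen \<Rightarrow> complex" where
  "psi_gen f = (case f of (u, g, v) \<Rightarrow>
     if u = v then complex_of_real (real CARD('x) powi (- int (length u))
                     * measure bernoulli_mu {w. g w = w}) else 0)"

definition psi :: "(complex \<times> 'x::finite gen) list \<Rightarrow> complex" where
  "psi eta = (\<Sum>(c, f)\<leftarrow>eta. c * psi_gen f)"

end

(*
  By G-regularity, the value of psi on S_u g S_v^* is the measure of the interior of the fixed
  point set of S_u g S_v^*, and this interior is empty when u <> v; so psi(eta) is the integral of
  F = sum_i c_i 1_{int Fix(f_i)}.  The boundaries of these interiors are null, so for almost
  every w some prefix p of w determines all indicators near w.  Strict regularity of w0 shows
  that f_i fixes p w0 exactly when p w0 lies in the interior of Fix(f_i).  Hence F(w) is the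
  diagonal coefficient <pi_w0(eta) delta_{p w0}, delta_{p w0}>, and F vanishes almost
  everywhere when pi_w0(eta) = 0.
*)
theory Submission
  imports Defs
begin

definition agree :: "nat \<Rightarrow> 'x infword \<Rightarrow> 'x infword \<Rightarrow> bool" where
  "agree n x y \<longleftrightarrow> (\<forall>i<n. x i = y i)"

definition wtake :: "nat \<Rightarrow> 'x infword \<Rightarrow> 'x list" where
  "wtake n w = map w [0..<n]"

lemma length_wtake [simp]: "length (wtake n w) = n"
  by (simp add: wtake_def)

lemma agree_refl [simp]: "agree n x x"
  by (simp add: agree_def)

lemma agree_sym: "agree n x y \<Longrightarrow> agree n y x"
  by (auto simp: agree_def)

lemma agree_trans: "agree n x y \<Longrightarrow> agree n y z \<Longrightarrow> agree n x z"
  by (auto simp: agree_def)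

lemma agree_mono: "agree n x y \<Longrightarrow> m \<le> n \<Longrightarrow> agree m x y"
  by (auto simp: agree_def)

lemma agree_dropw: "agree n x y \<Longrightarrow> agree (n - m) (dropw m x) (dropw m y)"
  by (auto simp: agree_def dropw_def)

lemma agree_prep_iff: "agree (length u + n) (prep u x) (prep u y) \<longleftrightarrow> agree n x y"
  by (auto simp: agree_def prep_def)

lemma agree_prep: "agree (length u) (prep u x) (prep u y)"
  by (simp add: agree_def prep_def)

lemma has_prefix_Cons: "has_prefix (x # u) w \<longleftrightarrow> w 0 = x \<and> has_prefix u (dropw 1 w)"
  by (auto simp: has_prefix_def dropw_def nth_Cons split: nat.splits)

lemma dropw_0 [simp]: "dropw 0 w = w"
  by (simp add: dropw_def)

lemma dropw_dropw: "dropw n (dropw m w) = dropw (n + m) w"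
  by (simp add: dropw_def add.assoc)

lemma prep_Nil [simp]: "prep [] w = w"
  by (simp add: prep_def)

lemma prep_append: "prep (a @ b) w = prep a (prep b w)"
  by (auto simp: prep_def nth_append fun_eq_iff)

lemma dropw_prep [simp]: "dropw (length u) (prep u w) = w"
  by (simp add: dropw_def prep_def)

lemma has_prefix_prep [simp]: "has_prefix u (prep u w)"
  by (simp add: has_prefix_def prep_def)

lemma prep_dropw: "has_prefix v w \<Longrightarrow> prep v (dropw (length v) w) = w"
  by (auto simp: has_prefix_def prep_def dropw_def fun_eq_iff)

lemma has_prefix_wtake: "has_prefix (wtake n w) x \<longleftrightarrow> agree n x w"
  by (simp add: has_prefix_def agree_def wtake_def)

lemma prep_wtake_dropw: "prep (wtake n w) (dropw n w) = w"
  using prep_dropw[of "wtake n w" w] by (simp add: has_prefix_wtake)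

lemma has_prefix_agree: "has_prefix v w \<Longrightarrow> agree n x w \<Longrightarrow> length v \<le> n \<Longrightarrow> has_prefix v x"
  by (auto simp: has_prefix_def agree_def)

lemma prep_inject:
  assumes "length a = length b" "prep a w = prep b w'"
  shows "a = b \<and> w = w'"
proof
  show "a = b"
  proof (rule nth_equalityI)
    fix i assume "i < length a"
    then show "a ! i = b ! i" using fun_cong[OF assms(2), of i] assms(1) by (simp add: prep_def)
  qed (rule assms(1))
  then show "w = w'"
    using arg_cong[OF assms(2), of "dropw (length a)"] by simp
qed

lemma prep_eq_prep_le:
  assumes "length a \<le> length b" "prep a w = prep b w'"
  shows "b = a @ drop (length a) b \<and> w = prep (drop (length a) b) w'"
proof -
  have "prep a w = prep (take (length a) b) (prep (drop (length a) b) w')"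
    using assms(2) by (simp add: prep_append[symmetric])
  then have "a = take (length a) b \<and> w = prep (drop (length a) b) w'"
    using prep_inject[of a "take (length a) b"] assms(1) by simp
  then show ?thesis by (metis append_take_drop_id)
qed

lemma exists_disagree_at:
  assumes "CARD('x::finite) \<ge> 2"
  shows "\<exists>y::'x infword. agree n y r \<and> y n \<noteq> r n"
proof -
  have "\<not> (UNIV :: 'x set) \<subseteq> {r n}"
  proof
    assume "(UNIV :: 'x set) \<subseteq> {r n}"
    then have "CARD('x) \<le> card {r n}" by (intro card_mono) auto
    with assms show False by simp
  qed
  then obtain c :: 'x where "c \<noteq> r n" by blast
  then show ?thesis by (intro exI[of _ "r(n := c)"]) (simp add: agree_def)
qed

subsection \<open>The Bernoulli measure\<close>

abbreviation uniform_letter :: "'x::finite measure" where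
  "uniform_letter \<equiv> measure_pmf (pmf_of_set UNIV)"

lemma prob_space_bernoulli_mu: "prob_space (bernoulli_mu :: 'x::finite infword measure)"
  unfolding bernoulli_mu_def by (rule prob_space_PiM) (simp add: prob_space_measure_pmf)

lemma space_bernoulli_mu [simp]: "space (bernoulli_mu :: 'x::finite infword measure) = UNIV"
  by (simp add: bernoulli_mu_def space_PiM)

lemma measurable_letter: "(\<lambda>w. w i) \<in> measurable (bernoulli_mu :: 'x::finite infword measure) uniform_letter"
  unfolding bernoulli_mu_def by (rule measurable_component_singleton) simp

lemma measurable_dropw: "dropw n \<in> measurable (bernoulli_mu :: 'x::finite infword measure) bernoulli_mu"
  unfolding dropw_def
  by (subst (2) bernoulli_mu_def, rule measurable_PiM_single') (use measurable_letter in auto)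

lemma sets_dropw_vimage:
  "A \<in> sets (bernoulli_mu :: 'x::finite infword measure) \<Longrightarrow> {w. dropw n w \<in> A} \<in> sets bernoulli_mu"
  using measurable_sets[OF measurable_dropw] by (simp add: vimage_def)

lemma sets_head_tail:
  assumes "A \<in> sets (bernoulli_mu :: 'x::finite infword measure)"
  shows "{w. w 0 \<in> B \<and> dropw 1 w \<in> A} \<in> sets bernoulli_mu"
proof -
  have "{w. w 0 \<in> B \<and> dropw 1 w \<in> A} = (\<lambda>w. w 0) -` B \<inter> space bernoulli_mu \<inter> {w. dropw 1 w \<in> A}"
    by auto
  then show ?thesis
    using measurable_sets[OF measurable_letter, of B 0] sets_dropw_vimage[OF assms, of 1] by auto
qed

lemma emeasure_head_tail:
  assumes A: "A \<in> sets (bernoulli_mu :: 'x::finite infword measure)"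
  shows "emeasure bernoulli_mu {w. w 0 \<in> B \<and> dropw 1 w \<in> A}
       = emeasure uniform_letter B * emeasure bernoulli_mu A"
proof -
  let ?f = "\<lambda>(s::'x, \<omega>::'x infword). case_nat s \<omega>"
  have seq: "sequence_space (uniform_letter :: 'x measure)"
    by (simp add: sequence_space_def product_prob_space_def product_prob_space_axioms_def
        product_sigma_finite_def prob_space_measure_pmf prob_space_imp_sigma_finite)
  have f: "?f \<in> measurable (uniform_letter \<Otimes>\<^sub>M bernoulli_mu) bernoulli_mu"
    unfolding split_beta' bernoulli_mu_def by (intro measurable_case_nat' measurable_fst measurable_snd)
  have "?f -` {w. w 0 \<in> B \<and> dropw 1 w \<in> A} \<inter> space (uniform_letter \<Otimes>\<^sub>M bernoulli_mu) = B \<times> A"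
    by (auto simp: space_pair_measure dropw_def)
  then have "emeasure (distr (uniform_letter \<Otimes>\<^sub>M bernoulli_mu) bernoulli_mu ?f) {w. w 0 \<in> B \<and> dropw 1 w \<in> A}
      = emeasure (uniform_letter \<Otimes>\<^sub>M bernoulli_mu) (B \<times> A)"
    by (simp only: emeasure_distr[OF f sets_head_tail[OF A]])
  also have "\<dots> = emeasure uniform_letter B * emeasure bernoulli_mu A"
    by (rule sigma_finite_measure.emeasure_pair_measure_Times)
      (simp_all add: A prob_space_imp_sigma_finite[OF prob_space_bernoulli_mu])
  finally show ?thesis
    unfolding bernoulli_mu_def using sequence_space.PiM_iter[OF seq] by simp
qed

lemma prefix_cylinder_Cons:
  "{w. has_prefix (x # u) w \<and> dropw (length (x # u)) w \<in> A}
   = {w. w 0 \<in> {x} \<and> dropw 1 w \<in> {w'. has_prefix u w' \<and> dropw (length u) w' \<in> A}}"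
  by (auto simp: has_prefix_Cons dropw_dropw)

lemma sets_prefix_cylinder:
  assumes A: "A \<in> sets (bernoulli_mu :: 'x::finite infword measure)"
  shows "{w. has_prefix u w \<and> dropw (length u) w \<in> A} \<in> sets bernoulli_mu"
proof (induction u)
  case (Cons x u)
  then show ?case unfolding prefix_cylinder_Cons by (rule sets_head_tail)
qed (simp add: has_prefix_def A)

lemma emeasure_prefix_cylinder:
  assumes A: "A \<in> sets (bernoulli_mu :: 'x::finite infword measure)"
  shows "emeasure bernoulli_mu {w. has_prefix u w \<and> dropw (length u) w \<in> A}
       = ennreal ((1 / real CARD('x)) ^ length u) * emeasure bernoulli_mu A"
proof (induction u)
  case Nil
  then show ?case by (simp add: has_prefix_def)
next
  case (Cons x u)
  then show ?case
    unfolding prefix_cylinder_Cons emeasure_head_tail[OF sets_prefix_cylinder[OF A]]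
    by (simp add: emeasure_pmf_single ennreal_mult'[symmetric] mult.assoc[symmetric])
qed

lemma emeasure_dropw_vimage:
  assumes A: "A \<in> sets (bernoulli_mu :: 'x::finite infword measure)"
  shows "emeasure bernoulli_mu {w. dropw n w \<in> A} = emeasure bernoulli_mu A"
proof (induction n)
  case (Suc n)
  have "{w. dropw (Suc n) w \<in> A} = {w. w 0 \<in> UNIV \<and> dropw 1 w \<in> {w'. dropw n w' \<in> A}}"
    by (auto simp: dropw_dropw)
  then show ?case
    using Suc emeasure_head_tail[OF sets_dropw_vimage[OF A], where B=UNIV]
    by (simp add: measure_pmf.emeasure_space_1[simplified])
qed simp

lemma null_sets_dropw_vimage:
  "A \<in> null_sets (bernoulli_mu :: 'x::finite infword measure) \<Longrightarrow> {w. dropw n w \<in> A} \<in> null_sets bernoulli_mu"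
  using sets_dropw_vimage[of A n] emeasure_dropw_vimage[of A n] by (simp add: null_sets_def)

definition cylinder_interior :: "('x infword \<Rightarrow> bool) \<Rightarrow> 'x infword set" where
  "cylinder_interior P = {w. \<exists>n. \<forall>x. agree n x w \<longrightarrow> P x}"

lemma openin_Xomega_top_cylinder:
  assumes "openin Xomega_top U" "w \<in> U"
  shows "\<exists>n. \<forall>x. agree n x w \<longrightarrow> x \<in> U"
proof -
  obtain V where V: "finite {i. V i \<noteq> UNIV}" "w \<in> Pi\<^sub>E UNIV V" "Pi\<^sub>E UNIV V \<subseteq> U"
    using assms unfolding Xomega_top_def openin_product_topology_alt by auto
  obtain k where k: "{i. V i \<noteq> UNIV} \<subseteq> {..<k}"
    using V(1) finite_nat_bounded by blast
  have "x \<in> Pi\<^sub>E UNIV V" if "agree k x w" for x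
  proof -
    have "x i \<in> V i" for i
      using that V(2) k by (cases "i < k") (auto simp: agree_def PiE_iff subset_iff, metis UNIV_I)
    then show ?thesis by (simp add: PiE_iff)
  qed
  then show ?thesis using V(3) by blast
qed

lemma cylinder_interior_subset: "w \<in> cylinder_interior P \<Longrightarrow> P w"
  unfolding cylinder_interior_def by auto

lemma cylinder_interior_open:
  "w \<in> cylinder_interior P \<Longrightarrow> \<exists>n. \<forall>x. agree n x w \<longrightarrow> x \<in> cylinder_interior P"
  unfolding cylinder_interior_def by (blast intro: agree_trans)

text \<open>A cylinder-open set is a countable union of prefix cylinders.\<close>
lemma sets_cylinder_open:
  assumes "\<forall>w\<in>S. \<exists>n. \<forall>x. agree n x w \<longrightarrow> x \<in> S"
  shows "S \<in> sets (bernoulli_mu :: 'x::finite infword measure)"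
proof -
  define C where "C p = {w. has_prefix p w}" for p :: "'x list"
  have "S = (\<Union>p\<in>{p. C p \<subseteq> S}. C p)"
  proof (intro equalityI subsetI)
    fix w assume "w \<in> S"
    then obtain n where "\<forall>x. agree n x w \<longrightarrow> x \<in> S" using assms by blast
    then have "C (wtake n w) \<subseteq> S" "w \<in> C (wtake n w)"
      by (auto simp: C_def has_prefix_wtake)
    then show "w \<in> (\<Union>p\<in>{p. C p \<subseteq> S}. C p)" by blast
  qed auto
  also have "\<dots> \<in> sets bernoulli_mu"
  proof (intro sets.countable_UN' image_subsetI)
    fix p show "C p \<in> sets bernoulli_mu"
      using sets_prefix_cylinder[OF sets.top, of p] by (simp add: C_def)
  qed simp
  finally show ?thesis .
qed

lemma sets_cylinder_interior:
  "cylinder_interior P \<in> sets (bernoulli_mu :: 'x::finite infword measure)"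
  using cylinder_interior_open by (blast intro: sets_cylinder_open)

lemma self_similar_prep:
  assumes ss: "self_similar_group G" and "g \<in> G"
  shows "\<exists>p' h. length p' = length p \<and> h \<in> G \<and> (\<forall>y. g (prep p y) = prep p' (h y))"
  using \<open>g \<in> G\<close>
proof (induction p arbitrary: g)
  case Nil
  then show ?case by (intro exI[of _ "[]"] exI[of _ g]) simp
next
  case (Cons x p)
  obtain y h1 where h1: "h1 \<in> G" "\<forall>w. g (prep [x] w) = prep [y] (h1 w)"
    using ss Cons.prems unfolding self_similar_group_def by blast
  obtain p'' h2 where h2: "length p'' = length p" "h2 \<in> G" "\<forall>z. h1 (prep p z) = prep p'' (h2 z)"
    using Cons.IH[OF h1(1)] by blast
  have "g (prep (x # p) z) = prep (y # p'') (h2 z)" for z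
    using h1(2) h2(3) prep_append[of "[x]" p z] prep_append[of "[y]" p'' "h2 z"] by simp
  then show ?case using h2 by (intro exI[of _ "y # p''"] exI[of _ h2]) simp
qed

lemma self_similar_agree:
  assumes ss: "self_similar_group G" and g: "g \<in> G" and a: "agree n x y"
  shows "agree n (g x) (g y)"
proof -
  obtain p' h where ph: "length p' = n" "\<forall>z. g (prep (wtake n x) z) = prep p' (h z)"
    using self_similar_prep[OF ss g, of "wtake n x"] by auto
  have "wtake n y = wtake n x"
    using a by (auto simp: wtake_def agree_def)
  then have "g x = prep p' (h (dropw n x))" "g y = prep p' (h (dropw n y))"
    using ph(2) prep_wtake_dropw[of n x] prep_wtake_dropw[of n y] by metis+
  then show ?thesis using agree_prep[of p'] ph(1) by simp
qed

subsection \<open>Fixed points of the partial homeomorphisms\<close>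

definition is_fixed :: "'x gen \<Rightarrow> 'x infword \<Rightarrow> bool" where
  "is_fixed f x \<longleftrightarrow> pact f x = Some x"

abbreviation fix_interior :: "('x infword \<Rightarrow> 'x infword) \<Rightarrow> 'x infword set" where
  "fix_interior g \<equiv> cylinder_interior (\<lambda>x. g x = x)"

abbreviation gen_fix_interior :: "'x gen \<Rightarrow> 'x infword set" where
  "gen_fix_interior f \<equiv> cylinder_interior (is_fixed f)"

lemma GX_iff [simp]: "(u, g, v) \<in> GX G \<longleftrightarrow> g \<in> G"
  by (simp add: GX_def)

lemma is_fixed_iff:
  "is_fixed (u, g, v) x \<longleftrightarrow> has_prefix v x \<and> prep u (g (dropw (length v) x)) = x"
  by (auto simp: is_fixed_def pact_def)

lemma is_fixed_Nil_Nil: "is_fixed ([], g, []) x \<longleftrightarrow> g x = x"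
  by (simp add: is_fixed_iff has_prefix_def)

lemma is_fixed_diagonal:
  "is_fixed (u, g, u) x \<longleftrightarrow> has_prefix u x \<and> g (dropw (length u) x) = dropw (length u) x"
  using prep_dropw[of u x] prep_inject[of u u] by (metis is_fixed_iff)

lemma not_fixed_cylinder:
  assumes ss: "self_similar_group G" and g: "g \<in> G" and nf: "\<not> is_fixed (u, g, v) w"
  shows "\<exists>n. \<forall>x. agree n x w \<longrightarrow> \<not> is_fixed (u, g, v) x"
proof (cases "has_prefix v w")
  case False
  then show ?thesis
    by (metis agree_sym has_prefix_agree is_fixed_iff order_refl)
next
  case True
  let ?d = "dropw (length v)"
  obtain i where i: "prep u (g (?d w)) i \<noteq> w i"
    using nf True by (auto simp: is_fixed_iff)
  have "\<not> is_fixed (u, g, v) x" if a: "agree (length v + Suc i) x w" for x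
  proof
    assume "is_fixed (u, g, v) x"
    then have fx: "prep u (g (?d x)) = x" by (simp add: is_fixed_iff)
    have "agree (Suc i) (?d x) (?d w)" using agree_dropw[OF a, of "length v"] by simp
    then have "agree (length u + Suc i) (prep u (g (?d x))) (prep u (g (?d w)))"
      using self_similar_agree[OF ss g] agree_prep_iff by blast
    then have "prep u (g (?d x)) i = prep u (g (?d w)) i" by (simp add: agree_def)
    moreover have "x i = w i" using a by (simp add: agree_def)
    ultimately show False using fx i by simp
  qed
  then show ?thesis by blast
qed

lemma sets_fixed:
  assumes ss: "self_similar_group G" and g: "g \<in> G"
  shows "{w. g w = w} \<in> sets (bernoulli_mu :: 'x::finite infword measure)"
proof -
  have "{w. g w \<noteq> w} \<in> sets (bernoulli_mu :: 'x::finite infword measure)"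
    using not_fixed_cylinder[OF ss g, of "[]" "[]"]
    by (intro sets_cylinder_open) (auto simp: is_fixed_Nil_Nil)
  from sets.compl_sets[OF this] show ?thesis
    by (simp add: Compl_eq_Diff_UNIV[symmetric] Collect_neg_eq[symmetric])
qed

lemma gen_fix_interior_diagonal:
  "gen_fix_interior (u, g, u) = {w. has_prefix u w \<and> dropw (length u) w \<in> fix_interior g}"
proof (intro set_eqI iffI)
  fix w assume "w \<in> gen_fix_interior (u, g, u)"
  then obtain n where n: "\<forall>x. agree n x w \<longrightarrow> is_fixed (u, g, u) x"
    by (auto simp: cylinder_interior_def)
  then have hp: "has_prefix u w" using is_fixed_diagonal agree_refl by blast
  have "g y = y" if "agree n y (dropw (length u) w)" for y
  proof -
    have "agree (length u + n) (prep u y) w"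
      using that agree_prep_iff[of u n y] prep_dropw[OF hp] by metis
    then show ?thesis using n agree_mono is_fixed_diagonal[of u g "prep u y"] by fastforce
  qed
  with hp show "w \<in> {w. has_prefix u w \<and> dropw (length u) w \<in> fix_interior g}"
    by (auto simp: cylinder_interior_def)
next
  fix w assume "w \<in> {w. has_prefix u w \<and> dropw (length u) w \<in> fix_interior g}"
  then obtain n where hp: "has_prefix u w" and n: "\<forall>y. agree n y (dropw (length u) w) \<longrightarrow> g y = y"
    by (auto simp: cylinder_interior_def)
  have "is_fixed (u, g, u) x" if a: "agree (length u + n) x w" for x
    using has_prefix_agree[OF hp a] n agree_dropw[OF a, of "length u"] by (simp add: is_fixed_diagonal)
  then show "w \<in> gen_fix_interior (u, g, u)"
    by (auto simp: cylinder_interior_def)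
qed

text \<open>Off the diagonal, a fixed cylinder would be mapped by an element of \<open>G\<close> onto a
  strictly longer or strictly shorter cylinder, but elements of \<open>G\<close> preserve prefix lengths.\<close>
lemma gen_fix_interior_off_diagonal:
  assumes card: "CARD('x::finite) \<ge> 2" and ss: "self_similar_group G" and g: "g \<in> G"
    and uv: "u \<noteq> v"
  shows "gen_fix_interior (u, g, v) = ({} :: 'x infword set)"
proof (rule ccontr)
  assume "gen_fix_interior (u, g, v) \<noteq> {}"
  then obtain w n where n: "\<forall>x. agree n x w \<longrightarrow> is_fixed (u, g, v) x"
    by (auto simp: cylinder_interior_def)
  then have hp: "has_prefix v w" by (simp add: is_fixed_iff)
  define r where "r = dropw (length v) w"
  have fixed: "prep u (g y) = prep v y" if "agree n y r" for y
  proof -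
    have "agree n (prep v y) w"
      using that agree_prep_iff[of v n y r] prep_dropw[OF hp] agree_mono
      by (metis le_add2 r_def)
    from n[rule_format, OF this] show ?thesis by (simp add: is_fixed_iff)
  qed
  obtain y where y: "agree n y r" "y n \<noteq> r n"
    using exists_disagree_at[OF card] by blast
  show False
  proof (cases "length u \<le> length v")
    case True
    define s where "s = drop (length u) v"
    have "s \<noteq> []" using True uv prep_eq_prep_le[OF True fixed[OF y(1)]] by (auto simp: s_def)
    have gs: "g y' = prep s y'" if "agree n y' r" for y'
      using prep_eq_prep_le[OF True fixed[OF that]] by (simp add: s_def)
    have "inv g \<in> G" using ss g by (simp add: self_similar_group_def)
    have "inj g"
      using ss g homeomorphic_imp_injective_map[of Xomega_top Xomega_top g]
      by (simp add: self_similar_group_def Xomega_top_def)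
    then have "inv g (prep s y) = y" "inv g (prep s r) = r"
      using inv_f_f gs[OF y(1)] gs[OF agree_refl] by metis+
    moreover have "agree (length s + n) (inv g (prep s y)) (inv g (prep s r))"
      using self_similar_agree[OF ss \<open>inv g \<in> G\<close>] agree_prep_iff y(1) by blast
    ultimately show False using y(2) \<open>s \<noteq> []\<close> by (auto simp: agree_def)
  next
    case False
    define s where "s = drop (length v) u"
    have "s \<noteq> []" using False by (simp add: s_def)
    have gs: "prep s (g y') = y'" if "agree n y' r" for y'
      using prep_eq_prep_le[of v u, OF _ fixed[OF that, symmetric]] False by (simp add: s_def)
    have "agree (length s + n) (prep s (g y)) (prep s (g r))"
      using self_similar_agree[OF ss g y(1)] agree_prep_iff by blast
    then show False using gs y \<open>s \<noteq> []\<close> by (auto simp: agree_def)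
  qed
qed

lemma G_regular_fixed_imp_fix_interior:
  assumes "G_regular G w" "g \<in> G" "g w = w"
  shows "w \<in> fix_interior g"
proof -
  have pact_g: "pact ([], g, []) v = Some (g v)" for v
    by (simp add: pact_def has_prefix_def)
  have "f_regular ([], g, []) w"
    using assms(1,2) by (simp add: G_regular_def)
  then obtain U where U: "openin Xomega_top U" "w \<in> U" "\<forall>v\<in>U. g v = v"
    using assms(3) by (auto simp: f_regular_def pact_g)
  then show ?thesis
    using openin_Xomega_top_cylinder[OF U(1,2)] by (auto simp: cylinder_interior_def)
qed

lemma fixed_diff_fix_interior_null:
  assumes ss: "self_similar_group G" and ae: "AE w in bernoulli_mu. G_regular G w" and g: "g \<in> G"
  shows "{w. g w = w} - fix_interior g \<in> null_sets (bernoulli_mu :: 'x::finite infword measure)"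
proof -
  let ?N = "{w. g w = w} - fix_interior g"
  have N: "?N \<in> sets (bernoulli_mu :: 'x infword measure)"
    using sets_fixed[OF ss g] sets_cylinder_interior by blast
  have "AE w in (bernoulli_mu :: 'x infword measure). g w = w \<longrightarrow> w \<in> fix_interior g"
    using ae by eventually_elim (use G_regular_fixed_imp_fix_interior g in blast)
  moreover have "{w \<in> space bernoulli_mu. \<not> (g w = w \<longrightarrow> w \<in> fix_interior g)} = ?N"
    by auto
  ultimately show ?thesis
    using AE_iff_measurable[OF N] N by (simp add: null_sets_def)
qed

lemma psi_gen_eq_measure:
  assumes card: "CARD('x::finite) \<ge> 2" and ss: "self_similar_group G"
    and ae: "AE w in bernoulli_mu. G_regular G w" and g: "g \<in> G"
  shows "psi_gen (u, g, v) = complex_of_real (measure (bernoulli_mu :: 'x infword measure) (gen_fix_interior (u, g, v)))"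
proof (cases "u = v")
  case False
  then show ?thesis using gen_fix_interior_off_diagonal[OF card ss g False] by (simp add: psi_gen_def)
next
  case True
  let ?M = "bernoulli_mu :: 'x infword measure"
  have "measure ?M (fix_interior g) = measure ?M ({w. g w = w} - ({w. g w = w} - fix_interior g))"
    using cylinder_interior_subset by (intro arg_cong[where f = "measure ?M"]) blast
  also have "\<dots> = measure ?M {w. g w = w}"
    by (rule measure_Diff_null_set[OF sets_fixed[OF ss g] fixed_diff_fix_interior_null[OF ss ae g]])
  finally have "measure ?M (fix_interior g) = measure ?M {w. g w = w}" .
  moreover have "measure ?M (gen_fix_interior (u, g, u)) = (1 / real CARD('x)) ^ length u * measure ?M (fix_interior g)"
    unfolding gen_fix_interior_diagonal measure_def emeasure_prefix_cylinder[OF sets_cylinder_interior]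
    by (simp add: enn2real_mult)
  moreover have "real CARD('x) powi (- int (length u)) = (1 / real CARD('x)) ^ length u"
    by (simp add: power_int_def power_one_over inverse_eq_divide)
  ultimately show ?thesis using True by (simp add: psi_gen_def)
qed

text \<open>Almost every point lies off the boundary of each \<open>gen_fix_interior f\<close>: on the diagonal the
  boundary consists of fixed points outside the interior, a null set by \<open>G\<close>-regularity.\<close>
lemma AE_gen_fix_interior_locally_constant:
  assumes card: "CARD('x::finite) \<ge> 2" and ss: "self_similar_group G"
    and ae: "AE w in bernoulli_mu. G_regular G w" and g: "g \<in> G"
  shows "AE w in (bernoulli_mu :: 'x infword measure). \<exists>n. \<forall>x. agree n x w \<longrightarrow>
     (x \<in> gen_fix_interior (u, g, v) \<longleftrightarrow> w \<in> gen_fix_interior (u, g, v))"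
proof (cases "u = v")
  case False
  then show ?thesis using gen_fix_interior_off_diagonal[OF card ss g False] by simp
next
  case True
  let ?D = "{w. g w = w} - fix_interior g"
  have "?D \<in> null_sets (bernoulli_mu :: 'x infword measure)"
    using fixed_diff_fix_interior_null[OF ss ae g] .
  then have "AE w in bernoulli_mu. dropw (length u) w \<notin> ?D"
    by (rule AE_not_in[OF null_sets_dropw_vimage[where n="length u"], THEN AE_mp]) simp
  then show ?thesis
  proof eventually_elim
    fix w :: "'x infword"
    assume wD: "dropw (length u) w \<notin> ?D"
    show "\<exists>n. \<forall>x. agree n x w \<longrightarrow> (x \<in> gen_fix_interior (u, g, v) \<longleftrightarrow> w \<in> gen_fix_interior (u, g, v))"
    proof (cases "w \<in> gen_fix_interior (u, g, v)")
      case True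
      then show ?thesis using cylinder_interior_open[OF True] by simp
    next
      case False
      have "\<not> is_fixed (u, g, u) w"
      proof
        assume "is_fixed (u, g, u) w"
        then have "has_prefix u w" "g (dropw (length u) w) = dropw (length u) w"
          by (simp_all add: is_fixed_diagonal)
        with wD have "w \<in> gen_fix_interior (u, g, u)"
          unfolding gen_fix_interior_diagonal by blast
        with False \<open>u = v\<close> show False by simp
      qed
      then obtain n where "\<forall>x. agree n x w \<longrightarrow> \<not> is_fixed (u, g, u) x"
        using not_fixed_cylinder[OF ss g] by blast
      then show ?thesis
        using False \<open>u = v\<close> cylinder_interior_subset[where P = "is_fixed (u, g, u)"] by blast
    qed
  qed
qed

lemma eventually_agree_sequentially:
  assumes "\<forall>x. agree n x w \<longrightarrow> P x"
  shows "eventually (\<lambda>m. \<forall>x. agree m x w \<longrightarrow> P x) sequentially"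
  using assms agree_mono by (intro eventually_sequentiallyI[of n]) blast

fun stable_prefix :: "nat \<Rightarrow> 'x infword \<Rightarrow> 'x gen \<Rightarrow> bool" where
  "stable_prefix n w (u, g, v) = (length v \<le> n \<and>
     (\<forall>x. agree n x w \<longrightarrow> (x \<in> gen_fix_interior (u, g, v) \<longleftrightarrow> w \<in> gen_fix_interior (u, g, v))))"

lemma AE_eventually_stable_prefix:
  assumes card: "CARD('x::finite) \<ge> 2" and ss: "self_similar_group G"
    and ae: "AE w in bernoulli_mu. G_regular G w" and g: "g \<in> G"
  shows "AE w in (bernoulli_mu :: 'x infword measure). eventually (\<lambda>n. stable_prefix n w (u, g, v)) sequentially"
  using AE_gen_fix_interior_locally_constant[OF card ss ae g, of u v]
proof eventually_elim
  case (elim w)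
  then obtain n where "\<forall>x. agree n x w \<longrightarrow>
      (x \<in> gen_fix_interior (u, g, v) \<longleftrightarrow> w \<in> gen_fix_interior (u, g, v))" ..
  from eventually_conj[OF eventually_agree_sequentially[OF this] eventually_ge_at_top[of "length v"]]
  show ?case
    by (rule eventually_mono) (unfold stable_prefix.simps, blast)
qed

subsection \<open>Strictly regular points\<close>

lemma strictly_regular_fixed_locally:
  assumes "strictly_G_regular G w0" "f \<in> GX G" "is_fixed f w0"
  shows "\<exists>n. \<forall>x. agree n x w0 \<longrightarrow> is_fixed f x"
proof -
  have "f_regular f w0"
    using assms(1,2) by (simp add: strictly_G_regular_def)
  then obtain U where U: "openin Xomega_top U" "w0 \<in> U" "\<forall>v\<in>U. pact f v = Some v"
    using assms(3) by (auto simp: f_regular_def is_fixed_def)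
  obtain n where "\<forall>x. agree n x w0 \<longrightarrow> x \<in> U"
    using openin_Xomega_top_cylinder[OF U(1,2)] by blast
  with U(3) show ?thesis by (auto simp: is_fixed_def)
qed

lemma strictly_regular_shift_locally:
  assumes ss: "self_similar_group G" and sreg: "strictly_G_regular G w0"
    and h: "h \<in> G" and he: "h w0 = prep e w0"
  shows "\<exists>n. \<forall>y. agree n y w0 \<longrightarrow> h y = prep e y"
proof -
  define z where "z = wtake (length e) w0"
  obtain e' h' where eh: "length e' = length z" "h' \<in> G" "\<forall>y. h (prep z y) = prep e' (h' y)"
    using self_similar_prep[OF ss h, of z] by blast
  have w0z: "prep z (dropw (length e) w0) = w0"
    using prep_wtake_dropw[of "length e" w0] by (simp add: z_def)
  have "prep e' (h' (dropw (length e) w0)) = prep e w0"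
    using he eh(3) w0z by metis
  then have ee: "e' = e" "h' (dropw (length e) w0) = w0"
    using prep_inject[of e' e] eh(1) by (auto simp: z_def)
  have "is_fixed ([], h', z) w0"
    using ee by (simp add: is_fixed_iff z_def has_prefix_wtake)
  then obtain n where n: "\<forall>x. agree n x w0 \<longrightarrow> is_fixed ([], h', z) x"
    using strictly_regular_fixed_locally[OF sreg] eh(2) by (metis GX_iff)
  have "h y = prep e y" if "agree n y w0" for y
  proof -
    have yz: "has_prefix z y" and hy: "h' (dropw (length e) y) = y"
      using n that by (auto simp: is_fixed_iff z_def)
    have "h y = prep e (h' (dropw (length e) y))"
      using prep_dropw[OF yz] eh(3) ee(1) by (metis z_def length_wtake)
    then show ?thesis using hy by simp
  qed
  then show ?thesis by blast
qed

text \<open>Both sides are images of \<open>w0\<close> under elements of \<open>\<langle>G,X\<rangle>\<close>, so strict regularity of \<open>w0\<close>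
  spreads the identity to a neighbourhood.\<close>
lemma strictly_regular_prep_eq_locally:
  assumes ss: "self_similar_group G" and sreg: "strictly_G_regular G w0"
    and h: "h \<in> G" and eq: "prep a (h w0) = prep b w0"
  shows "\<exists>n. \<forall>y. agree n y w0 \<longrightarrow> prep a (h y) = prep b y"
proof (cases "length a \<le> length b")
  case True
  define e where "e = drop (length a) b"
  have "b = a @ e" "h w0 = prep e w0"
    using prep_eq_prep_le[OF True eq] by (auto simp: e_def)
  then show ?thesis
    using strictly_regular_shift_locally[OF ss sreg h] by (metis prep_append)
next
  case False
  define e where "e = drop (length b) a"
  have "a = b @ e" "prep e (h w0) = w0"
    using prep_eq_prep_le[OF _ eq[symmetric]] False by (auto simp: e_def)
  then have "is_fixed (e, h, []) w0"
    by (simp add: is_fixed_iff has_prefix_def)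
  then obtain n where "\<forall>y. agree n y w0 \<longrightarrow> is_fixed (e, h, []) y"
    using strictly_regular_fixed_locally[OF sreg] h by (metis GX_iff)
  then show ?thesis
    using \<open>a = b @ e\<close> by (metis is_fixed_iff prep_Nil dropw_0 list.size(3) prep_append)
qed

lemma strictly_regular_fixed_imp_gen_fix_interior:
  assumes ss: "self_similar_group G" and sreg: "strictly_G_regular G w0" and g: "g \<in> G"
    and len: "length v \<le> length q" and fx: "is_fixed (u, g, v) (prep q w0)"
  shows "prep q w0 \<in> gen_fix_interior (u, g, v)"
proof -
  have "has_prefix v (prep q w0)"
    using fx by (simp add: is_fixed_iff)
  then have "take (length v) q = v"
    using len by (auto simp: has_prefix_def prep_def intro!: nth_equalityI)
  then obtain q2 where q: "q = v @ q2" by (metis append_take_drop_id)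
  obtain p' h where ph: "h \<in> G" "\<forall>y. g (prep q2 y) = prep p' (h y)"
    using self_similar_prep[OF ss g, of q2] by blast
  have pq: "is_fixed (u, g, v) (prep q y) \<longleftrightarrow> prep (u @ p') (h y) = prep q y" for y
    using ph(2) q by (simp add: is_fixed_iff prep_append)
  obtain k where k: "\<forall>y. agree k y w0 \<longrightarrow> prep (u @ p') (h y) = prep q y"
    using strictly_regular_prep_eq_locally[OF ss sreg ph(1)] fx pq by blast
  have "is_fixed (u, g, v) x" if ax: "agree (length q + k) x (prep q w0)" for x
  proof -
    have xq: "prep q (dropw (length q) x) = x"
      using prep_dropw has_prefix_agree[OF has_prefix_prep ax] by simp
    then have "agree k (dropw (length q) x) w0"
      using ax agree_prep_iff by metis
    then show ?thesis using k pq xq by metis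
  qed
  then show ?thesis by (auto simp: cylinder_interior_def)
qed

lemma is_fixed_prep_wtake_iff:
  assumes ss: "self_similar_group G" and sreg: "strictly_G_regular G w0" and g: "g \<in> G"
    and stable: "stable_prefix n w (u, g, v)"
  shows "is_fixed (u, g, v) (prep (wtake n w) w0) \<longleftrightarrow> w \<in> gen_fix_interior (u, g, v)"
proof -
  from stable have len: "length v \<le> n"
    and loc: "\<forall>x. agree n x w \<longrightarrow> (x \<in> gen_fix_interior (u, g, v) \<longleftrightarrow> w \<in> gen_fix_interior (u, g, v))"
    unfolding stable_prefix.simps by blast+
  have "agree n (prep (wtake n w) w0) w"
    using agree_prep[of "wtake n w" w0 "dropw n w"] unfolding prep_wtake_dropw length_wtake .
  moreover have "is_fixed (u, g, v) (prep (wtake n w) w0) \<longleftrightarrow> prep (wtake n w) w0 \<in> gen_fix_interior (u, g, v)"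
    using strictly_regular_fixed_imp_gen_fix_interior[OF ss sreg g, where q = "wtake n w"] len
      cylinder_interior_subset[where P = "is_fixed (u, g, v)"] by auto
  ultimately show ?thesis using loc by blast
qed

subsection \<open>The functional as an integral\<close>

definition fix_indicator_sum :: "(complex \<times> 'x gen) list \<Rightarrow> 'x infword \<Rightarrow> complex" where
  "fix_indicator_sum eta w = (\<Sum>(c, f)\<leftarrow>eta. indicator (gen_fix_interior f) w *\<^sub>R c)"

lemma has_bochner_integral_fix_indicator_sum:
  "has_bochner_integral (bernoulli_mu :: 'x::finite infword measure) (fix_indicator_sum eta)
     (\<Sum>(c, f)\<leftarrow>eta. measure bernoulli_mu (gen_fix_interior f) *\<^sub>R c)"
proof (induction eta)
  case Nil
  then show ?case by (simp add: fix_indicator_sum_def has_bochner_integral_zero)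
next
  case (Cons cf eta)
  obtain c f where cf: "cf = (c, f)" by (cases cf)
  have "emeasure (bernoulli_mu :: 'x infword measure) (gen_fix_interior f) < \<infinity>"
    using finite_measure.emeasure_finite[OF prob_space.finite_measure[OF prob_space_bernoulli_mu]]
    by (simp add: top.not_eq_extremum)
  then have "has_bochner_integral bernoulli_mu
      (\<lambda>w. indicator (gen_fix_interior f) w *\<^sub>R c + fix_indicator_sum eta w)
      (measure bernoulli_mu (gen_fix_interior f) *\<^sub>R c + (\<Sum>(c, f)\<leftarrow>eta. measure bernoulli_mu (gen_fix_interior f) *\<^sub>R c))"
    using Cons sets_cylinder_interior by (intro has_bochner_integral_add has_bochner_integral_indicator)
  then show ?case by (simp add: cf fix_indicator_sum_def)
qed

lemma psi_eq_integral_fix_indicator_sum: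
  assumes card: "CARD('x::finite) \<ge> 2" and ss: "self_similar_group G"
    and ae: "AE w in bernoulli_mu. G_regular G w" and eta: "eta \<in> CGX G"
  shows "psi eta = integral\<^sup>L (bernoulli_mu :: 'x infword measure) (fix_indicator_sum eta)"
proof -
  have "psi eta = (\<Sum>(c, f)\<leftarrow>eta. measure (bernoulli_mu :: 'x infword measure) (gen_fix_interior f) *\<^sub>R c)"
    unfolding psi_def
  proof (intro arg_cong[where f = sum_list] map_cong refl)
    fix cf assume cf_in: "cf \<in> set eta"
    obtain c u g v where cf: "cf = (c, u, g, v)" by (cases cf) auto
    have "g \<in> G" using eta cf_in cf by (auto simp: CGX_def)
    then show "(case cf of (c, f) \<Rightarrow> c * psi_gen f) =
        (case cf of (c, f) \<Rightarrow> measure bernoulli_mu (gen_fix_interior f) *\<^sub>R c)"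
      using psi_gen_eq_measure[OF card ss ae] by (simp add: cf scaleR_conv_of_real)
  qed
  also have "\<dots> = integral\<^sup>L bernoulli_mu (fix_indicator_sum eta)"
    by (rule has_bochner_integral_integral_eq[OF has_bochner_integral_fix_indicator_sum, symmetric])
  finally show ?thesis .
qed

lemma prep_in_orbit: "self_similar_group G \<Longrightarrow> prep p w \<in> orbit G w"
  unfolding orbit_def
  by (intro CollectI bexI[of _ "(p, id, [])"]) (simp_all add: pact_def has_prefix_def self_similar_group_def)

text \<open>Replacing the tail of \<open>w\<close> by \<open>w0\<close> changes none of the indicators, and strict regularity
  of \<open>w0\<close> turns each of them into a fixed point test.\<close>
lemma fix_indicator_sum_eq_pi_rep_diagonal:
  assumes ss: "self_similar_group G" and sreg: "strictly_G_regular G w0" and eta: "eta \<in> CGX G"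
    and n: "\<forall>cf\<in>set eta. stable_prefix n w (snd cf)"
  shows "fix_indicator_sum eta w = pi_rep G w0 eta (prep (wtake n w) w0) (prep (wtake n w) w0)"
proof -
  let ?w1 = "prep (wtake n w) w0"
  have "fix_indicator_sum eta w = (\<Sum>(c, f)\<leftarrow>eta. if is_fixed f ?w1 then c else 0)"
    unfolding fix_indicator_sum_def
  proof (intro arg_cong[where f = sum_list] map_cong refl)
    fix cf assume cf_in: "cf \<in> set eta"
    obtain c u g v where cf: "cf = (c, u, g, v)" by (cases cf) auto
    have "g \<in> G" using eta cf_in cf by (auto simp: CGX_def)
    moreover have "stable_prefix n w (u, g, v)"
      using bspec[OF n cf_in] by (simp only: cf snd_conv)
    ultimately have "is_fixed (u, g, v) ?w1 \<longleftrightarrow> w \<in> gen_fix_interior (u, g, v)"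
      by (rule is_fixed_prep_wtake_iff[OF ss sreg])
    then show "(case cf of (c, f) \<Rightarrow> indicator (gen_fix_interior f) w *\<^sub>R c) =
        (case cf of (c, f) \<Rightarrow> if is_fixed f ?w1 then c else 0)"
      by (simp add: cf)
  qed
  also have "\<dots> = pi_rep G w0 eta ?w1 ?w1"
    using prep_in_orbit[OF ss] by (simp add: pi_rep_def is_fixed_def)
  finally show ?thesis .
qed

lemma AE_fix_indicator_sum_eq_pi_rep_diagonal:
  assumes card: "CARD('x::finite) \<ge> 2" and ss: "self_similar_group G"
    and ae: "AE w in bernoulli_mu. G_regular G w" and sreg: "strictly_G_regular G w0"
    and eta: "eta \<in> CGX G"
  shows "AE w in (bernoulli_mu :: 'x infword measure).
           \<exists>w1\<in>orbit G w0. fix_indicator_sum eta w = pi_rep G w0 eta w1 w1"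
proof -
  have "AE w in (bernoulli_mu :: 'x infword measure).
      \<forall>cf\<in>set eta. eventually (\<lambda>n. stable_prefix n w (snd cf)) sequentially"
  proof (rule AE_finite_allI[OF finite_set])
    fix cf assume cf_in: "cf \<in> set eta"
    obtain c u g v where cf: "cf = (c, u, g, v)" by (cases cf) auto
    have "g \<in> G" using eta cf_in cf by (auto simp: CGX_def)
    then show "AE w in bernoulli_mu. eventually (\<lambda>n. stable_prefix n w (snd cf)) sequentially"
      using AE_eventually_stable_prefix[OF card ss ae] by (simp only: cf snd_conv)
  qed
  then show ?thesis
  proof eventually_elim
    fix w :: "'x infword"
    assume "\<forall>cf\<in>set eta. eventually (\<lambda>n. stable_prefix n w (snd cf)) sequentially"
    then have "eventually (\<lambda>n. \<forall>cf\<in>set eta. stable_prefix n w (snd cf)) sequentially"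
      by (rule eventually_ball_finite[OF finite_set])
    then obtain n where "\<forall>cf\<in>set eta. stable_prefix n w (snd cf)"
      by (auto simp: eventually_sequentially)
    then show "\<exists>w1\<in>orbit G w0. fix_indicator_sum eta w = pi_rep G w0 eta w1 w1"
      using fix_indicator_sum_eq_pi_rep_diagonal[OF ss sreg eta] prep_in_orbit[OF ss] by blast
  qed
qed

lemma psi_eq_0_if_pi_rep_eq_0:
  assumes card: "CARD('x::finite) \<ge> 2" and ss: "self_similar_group G"
    and ae: "AE w in bernoulli_mu. G_regular G w" and sreg: "strictly_G_regular G (w0 :: 'x infword)"
    and eta: "eta \<in> CGX G" and pi0: "pi_rep G w0 eta = (\<lambda>_ _. 0)"
  shows "psi eta = 0"
proof -
  have "AE w in bernoulli_mu. fix_indicator_sum eta w = 0"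
    using AE_fix_indicator_sum_eq_pi_rep_diagonal[OF card ss ae sreg eta]
    by eventually_elim (simp add: pi0)
  then show ?thesis
    using psi_eq_integral_fix_indicator_sum[OF card ss ae eta] integral_eq_zero_AE by metis
qed

subsection \<open>Passing to the quotient by the kernel of \<open>\<pi>\<^sub>w\<close>\<close>

definition scale_comb :: "complex \<Rightarrow> (complex \<times> 'x gen) list \<Rightarrow> (complex \<times> 'x gen) list" where
  "scale_comb a eta = map (\<lambda>(c, f). (a * c, f)) eta"

lemma CGX_append: "eta1 \<in> CGX G \<Longrightarrow> eta2 \<in> CGX G \<Longrightarrow> eta1 @ eta2 \<in> CGX G"
  by (auto simp: CGX_def)

lemma CGX_scale_comb: "eta \<in> CGX G \<Longrightarrow> scale_comb a eta \<in> CGX G"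
  by (auto simp: CGX_def scale_comb_def)

lemma pi_rep_append: "pi_rep G w (eta1 @ eta2) w1 w2 = pi_rep G w eta1 w1 w2 + pi_rep G w eta2 w1 w2"
  by (simp add: pi_rep_def)

lemma pi_rep_scale_comb: "pi_rep G w (scale_comb a eta) w1 w2 = a * pi_rep G w eta w1 w2"
  unfolding pi_rep_def scale_comb_def by (induction eta) (auto simp: algebra_simps)

lemma psi_append: "psi (eta1 @ eta2) = psi eta1 + psi eta2"
  by (simp add: psi_def)

lemma psi_scale_comb: "psi (scale_comb a eta) = a * psi eta"
  unfolding psi_def scale_comb_def by (induction eta) (auto simp: algebra_simps)

lemma psi_factors_through_pi_rep:
  assumes kernel: "\<forall>eta\<in>CGX G. pi_rep G w eta = (\<lambda>_ _. 0) \<longrightarrow> psi eta = 0"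
  shows "\<exists>psi'. (\<forall>eta\<in>CGX G. psi' (pi_rep G w eta) = psi eta) \<and>
           (\<forall>eta1\<in>CGX G. \<forall>eta2\<in>CGX G. \<forall>a b.
              psi' (\<lambda>w1 w2. a * pi_rep G w eta1 w1 w2 + b * pi_rep G w eta2 w1 w2)
                = a * psi' (pi_rep G w eta1) + b * psi' (pi_rep G w eta2))"
proof -
  have psi_cong: "psi eta1 = psi eta2"
    if "eta1 \<in> CGX G" "eta2 \<in> CGX G" "pi_rep G w eta1 = pi_rep G w eta2" for eta1 eta2
  proof -
    have "psi (eta1 @ scale_comb (-1) eta2) = 0"
      using kernel that by (simp add: CGX_append CGX_scale_comb fun_eq_iff pi_rep_append pi_rep_scale_comb)
    then show ?thesis by (simp add: psi_append psi_scale_comb)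
  qed
  define psi' where "psi' P = psi (SOME eta. eta \<in> CGX G \<and> pi_rep G w eta = P)" for P
  have psi'_pi_rep: "psi' (pi_rep G w eta) = psi eta" if "eta \<in> CGX G" for eta
    unfolding psi'_def using someI[of "\<lambda>e. e \<in> CGX G \<and> pi_rep G w e = pi_rep G w eta", OF conjI[OF that refl]]
    by (blast intro: psi_cong that)
  have comb: "(\<lambda>w1 w2. a * pi_rep G w eta1 w1 w2 + b * pi_rep G w eta2 w1 w2)
      = pi_rep G w (scale_comb a eta1 @ scale_comb b eta2)" for a b eta1 eta2
    by (simp add: fun_eq_iff pi_rep_append pi_rep_scale_comb)
  show ?thesis
  proof (intro exI[of _ psi'] conjI ballI allI)
    fix eta1 eta2 a b assume "eta1 \<in> CGX G" "eta2 \<in> CGX G"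
    then show "psi' (\<lambda>w1 w2. a * pi_rep G w eta1 w1 w2 + b * pi_rep G w eta2 w1 w2)
        = a * psi' (pi_rep G w eta1) + b * psi' (pi_rep G w eta2)"
      unfolding comb by (simp add: psi'_pi_rep CGX_append CGX_scale_comb psi_append psi_scale_comb)
  qed (rule psi'_pi_rep)
qed

theorem mainTheorem6:
  fixes G :: "(('x::finite) infword \<Rightarrow> 'x infword) set" and w0 :: "'x infword"
  assumes "CARD('x) \<ge> 2"
    and "self_similar_group G"
    and "countable G"
    and "AE w in bernoulli_mu. G_regular G w"
    and "strictly_G_regular G w0"
  shows "(\<forall>eta\<in>CGX G. pi_rep G w0 eta = (\<lambda>_ _. 0) \<longrightarrow> psi eta = 0) \<and>
         (\<exists>psi'. (\<forall>eta\<in>CGX G. psi' (pi_rep G w0 eta) = psi eta) \<and>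
            (\<forall>eta1\<in>CGX G. \<forall>eta2\<in>CGX G. \<forall>a b.
               psi' (\<lambda>w1 w2. a * pi_rep G w0 eta1 w1 w2 + b * pi_rep G w0 eta2 w1 w2)
                 = a * psi' (pi_rep G w0 eta1) + b * psi' (pi_rep G w0 eta2)))"
proof -
  have "\<forall>eta\<in>CGX G. pi_rep G w0 eta = (\<lambda>_ _. 0) \<longrightarrow> psi eta = 0"
    using psi_eq_0_if_pi_rep_eq_0[OF assms(1,2,4,5)] by blast
  then show ?thesis using psi_factors_through_pi_rep by blast
qed

end
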